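(* In the upper half-space model $\mathbb{H}^3=\{x_3>0\}$ with metric $\frac{1}{x_3^2}(dx_1^2+dx_2^2+dx_3^2)$, let $E$ be the end of revolution $\{(\gamma_1(s)\cos\theta,\gamma_1(s)\sin\theta,\gamma_2(s)): s\ge0,\theta\in[0,2\pi)\}$, where $\gamma(s)=(\gamma_1(s),0,\gamma_2(s))$, $s\in[0,\infty)$, is a regular curve parametrized by hyperbolic arc length with $\gamma_1>0$, $\gamma_2>0$. Suppose that for some $c>0$ the set $I_+=\{s\in[0,\infty): \gamma_2(s)/\gamma_1(s)\ge c\}$ satisfies $\int_{I_+}ds=\infty$. Then $E$ is parabolic.
   Context: $E$ carries the metric induced by the immersion $(s,\theta)\mapsto(\gamma_1(s)\cos\theta,\gamma_1(s)\sin\theta,\gamma_2(s))$. An end is parabolic if every bounded harmonic function on it is determined by its boundary values. *)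

theory Defs
  imports "HOL-Analysis.Analysis"
begin

definition smooth_halfline :: "(real \<Rightarrow> real) \<Rightarrow> bool" where
  "smooth_halfline g \<longleftrightarrow> (\<exists>D. D 0 = g \<and>
     (\<forall>k s. 0 \<le> s \<longrightarrow> (D k has_real_derivative D (Suc k) s) (at s within {0..})))"

definition ps :: "(real \<times> real \<Rightarrow> real) \<Rightarrow> real \<times> real \<Rightarrow> real" where
  "ps u p = deriv (\<lambda>t. u (t, snd p)) (fst p)"

definition pt :: "(real \<times> real \<Rightarrow> real) \<Rightarrow> real \<times> real \<Rightarrow> real" where
  "pt u p = deriv (\<lambda>t. u (fst p, t)) (snd p)"

definition C2_on :: "(real \<times> real) set \<Rightarrow> (real \<times> real \<Rightarrow> real) \<Rightarrow> bool" where
  "C2_on S u \<longleftrightarrow> u differentiable_on S \<and>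
     ps u differentiable_on S \<and> pt u differentiable_on S \<and>
     continuous_on S (ps (ps u)) \<and> continuous_on S (pt (ps u)) \<and>
     continuous_on S (ps (pt u)) \<and> continuous_on S (pt (pt u))"

definition imm :: "(real \<Rightarrow> real) \<Rightarrow> (real \<Rightarrow> real) \<Rightarrow> nat \<Rightarrow> real \<times> real \<Rightarrow> real" where
  "imm g1 g2 i p = (if i = 0 then g1 (fst p) * cos (snd p)
                    else if i = 1 then g1 (fst p) * sin (snd p) else g2 (fst p))"

text \<open>Coefficients E, F, G of the metric induced by the immersion from the hyperbolic
  metric (dx1^2+dx2^2+dx3^2)/x3^2.\<close>
definition metE :: "(real \<Rightarrow> real) \<Rightarrow> (real \<Rightarrow> real) \<Rightarrow> real \<times> real \<Rightarrow> real" where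
  "metE g1 g2 p = (\<Sum>i<3. (ps (imm g1 g2 i) p)\<^sup>2) / (g2 (fst p))\<^sup>2"

definition metF :: "(real \<Rightarrow> real) \<Rightarrow> (real \<Rightarrow> real) \<Rightarrow> real \<times> real \<Rightarrow> real" where
  "metF g1 g2 p = (\<Sum>i<3. ps (imm g1 g2 i) p * pt (imm g1 g2 i) p) / (g2 (fst p))\<^sup>2"

definition metG :: "(real \<Rightarrow> real) \<Rightarrow> (real \<Rightarrow> real) \<Rightarrow> real \<times> real \<Rightarrow> real" where
  "metG g1 g2 p = (\<Sum>i<3. (pt (imm g1 g2 i) p)\<^sup>2) / (g2 (fst p))\<^sup>2"

text \<open>Laplace-Beltrami operator of the induced metric in the coordinates (s,theta):
  (1/sqrt g) d_i (sqrt g g^{ij} d_j u).\<close>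
definition laplace_beltrami ::
  "(real \<Rightarrow> real) \<Rightarrow> (real \<Rightarrow> real) \<Rightarrow> (real \<times> real \<Rightarrow> real) \<Rightarrow> real \<times> real \<Rightarrow> real" where
  "laplace_beltrami g1 g2 u p =
     (let E = metE g1 g2; F = metF g1 g2; G = metG g1 g2;
          W = (\<lambda>q. sqrt (E q * G q - (F q)\<^sup>2))
      in (ps (\<lambda>q. (G q * ps u q - F q * pt u q) / W q) p
          + pt (\<lambda>q. (E q * pt u q - F q * ps u q) / W q) p) / W p)"

text \<open>Functions on the end E = [0,\<infinity>) \<times> S^1 are functions of (s,theta), 2pi-periodic in theta.
  A bounded harmonic function on E, continuous up to the boundary s = 0.\<close>
definition bdd_harmonic_on_end ::
  "(real \<Rightarrow> real) \<Rightarrow> (real \<Rightarrow> real) \<Rightarrow> (real \<times> real \<Rightarrow> real) \<Rightarrow> bool" where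
  "bdd_harmonic_on_end g1 g2 u \<longleftrightarrow>
     (\<forall>s \<theta>. u (s, \<theta> + 2 * pi) = u (s, \<theta>)) \<and>
     continuous_on {p. 0 \<le> fst p} u \<and>
     (\<exists>M. \<forall>p. 0 \<le> fst p \<longrightarrow> \<bar>u p\<bar> \<le> M) \<and>
     C2_on {p. 0 < fst p} u \<and>
     (\<forall>p. 0 < fst p \<longrightarrow> laplace_beltrami g1 g2 u p = 0)"

definition parabolic_end :: "(real \<Rightarrow> real) \<Rightarrow> (real \<Rightarrow> real) \<Rightarrow> bool" where
  "parabolic_end g1 g2 \<longleftrightarrow>
     (\<forall>u v. bdd_harmonic_on_end g1 g2 u \<longrightarrow> bdd_harmonic_on_end g1 g2 v \<longrightarrow>
        (\<forall>\<theta>. u (0, \<theta>) = v (0, \<theta>)) \<longrightarrow> (\<forall>p. 0 \<le> fst p \<longrightarrow> u p = v p))"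

end

theory Submission
  imports Defs "HOL-Library.Periodic_Fun"
begin

text \<open>In the coordinates (s,\<theta>) the induced metric is \<open>ds\<^sup>2 + \<rho>\<^sup>2 d\<theta>\<^sup>2\<close> with
  \<open>\<rho> = \<gamma>\<^sub>1/\<gamma>\<^sub>2\<close>, so \<open>h(s) = \<integral>\<^sub>0\<^sup>s \<gamma>\<^sub>2/\<gamma>\<^sub>1\<close> is harmonic, and the hypothesis on
  \<open>I\<^sub>+\<close> makes h unbounded. If two bounded harmonic functions u, v with equal boundary values had
  \<open>u - v > 0\<close> somewhere, then for small \<open>\<epsilon>\<close>, large S and tiny \<open>\<delta>\<close> the strictly subharmonic
  function \<open>u - v - \<epsilon> h + \<delta> h\<^sup>2\<close> would be positive somewhere in \<open>[0,S] \<times> S\<^sup>1\<close> but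
  non-positive on both boundary circles, hence would have an interior maximum: impossible.\<close>

lemma has_real_derivative_at_pos:
  assumes "(g has_real_derivative D) (at s within {0..})" and "0 < s"
  shows "(g has_real_derivative D) (at s)"
  using assms at_within_interior[of s "{0::real..}"] by simp

lemma has_real_derivative_ps:
  assumes "f differentiable_on S" and "open S" and "(s, th) \<in> S"
  shows "((\<lambda>t. f (t, th)) has_real_derivative ps f (s, th)) (at s)"
proof -
  have "f differentiable at (s, th)"
    using assms differentiable_on_eq_differentiable_at by blast
  then have "(f \<circ> (\<lambda>t. (t, th))) differentiable at s"
    by (intro differentiable_chain_at) (auto intro!: derivative_intros)
  then show ?thesis
    unfolding ps_def by (simp add: o_def DERIV_deriv_iff_real_differentiable)
qed

lemma has_real_derivative_pt:
  assumes "f differentiable_on S" and "open S" and "(s, th) \<in> S"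
  shows "((\<lambda>t. f (s, t)) has_real_derivative pt f (s, th)) (at th)"
proof -
  have "f differentiable at (s, th)"
    using assms differentiable_on_eq_differentiable_at by blast
  then have "(f \<circ> (\<lambda>t. (s, t))) differentiable at th"
    by (intro differentiable_chain_at) (auto intro!: derivative_intros)
  then show ?thesis
    unfolding pt_def by (simp add: o_def DERIV_deriv_iff_real_differentiable)
qed

lemma DERIV_local_max_second:
  fixes f f' :: "real \<Rightarrow> real"
  assumes d: "0 < d" and max: "\<And>y. \<bar>x - y\<bar> < d \<Longrightarrow> f y \<le> f x"
    and f': "\<And>y. \<bar>x - y\<bar> < d \<Longrightarrow> (f has_real_derivative f' y) (at y)"
    and f'': "(f' has_real_derivative D) (at x)"
  shows "f' x = 0 \<and> D \<le> 0"
proof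
  show crit: "f' x = 0"
    using DERIV_local_max[OF f'[of x] d] max d by auto
  show "D \<le> 0"
  proof (rule ccontr)
    assume "\<not> D \<le> 0"
    then obtain e where e: "e > 0" "\<And>h. 0 < h \<Longrightarrow> h < e \<Longrightarrow> f' x < f' (x + h)"
      using DERIV_pos_inc_right[OF f''] by force
    define h where "h = min e d / 2"
    have h: "0 < h" "h < e" "h < d" using e d by (auto simp: h_def)
    obtain z where z: "x < z" "z < x + h" "f (x + h) - f x = h * f' z"
      using MVT2[of x "x + h" f f'] f' h by force
    have "f' z > 0" using e(2)[of "z - x"] z h crit by auto
    then have "f (x + h) > f x" using z h mult_pos_pos[of h "f' z"] by linarith
    moreover have "f (x + h) \<le> f x" using max[of "x + h"] h by auto
    ultimately show False by simp
  qed
qed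

text \<open>\<open>P, Q, T\<close> stand for \<open>\<partial>\<^sub>s w, \<partial>\<^sub>s\<^sup>2 w, \<partial>\<^sub>\<theta>\<^sup>2 w\<close> at a maximum of \<open>w - \<epsilon> h + \<delta> h\<^sup>2\<close>,
  where \<open>\<rho> h' = 1\<close> and \<open>k = \<epsilon> - 2 \<delta> h\<close>; the conclusion says \<open>\<rho>\<^sup>2 \<Delta>w < 0\<close> there.\<close>

lemma radial_operator_neg:
  fixes \<rho> \<rho>' k \<delta> P Q T :: real
  assumes "0 < \<rho>" and "0 < \<delta>" and P: "P - k / \<rho> = 0"
    and Q: "Q + (k * \<rho>' + 2 * \<delta>) / \<rho>\<^sup>2 \<le> 0" and T: "T \<le> 0"
  shows "\<rho>' * P + \<rho> * Q + T / \<rho> < 0"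
proof -
  have "\<rho> * Q \<le> \<rho> * (- ((k * \<rho>' + 2 * \<delta>) / \<rho>\<^sup>2))"
    using Q \<open>0 < \<rho>\<close> by (intro mult_left_mono) linarith+
  also have "\<dots> = - \<rho>' * P - 2 * \<delta> / \<rho>"
    using P \<open>0 < \<rho>\<close> by (simp add: field_simps power2_eq_square)
  finally have "\<rho>' * P + \<rho> * Q \<le> - 2 * \<delta> / \<rho>" by simp
  moreover have "T / \<rho> \<le> 0" using T \<open>0 < \<rho>\<close> by (simp add: divide_nonpos_pos)
  moreover have "0 < 2 * \<delta> / \<rho>" using assms by simp
  ultimately show ?thesis by linarith
qed

lemma periodic_attains_max_on_strip:
  fixes \<phi> :: "real \<times> real \<Rightarrow> real"
  assumes "a \<le> b" and "T > 0"
    and cont: "continuous_on ({a..b} \<times> {0..T}) \<phi>"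
    and per: "\<And>s \<theta>. \<phi> (s, \<theta> + T) = \<phi> (s, \<theta>)"
  shows "\<exists>s1\<in>{a..b}. \<exists>\<theta>1. \<forall>s\<in>{a..b}. \<forall>\<theta>. \<phi> (s, \<theta>) \<le> \<phi> (s1, \<theta>1)"
proof -
  obtain q where q: "q \<in> {a..b} \<times> {0..T}" and qmax: "\<And>y. y \<in> {a..b} \<times> {0..T} \<Longrightarrow> \<phi> y \<le> \<phi> q"
    using continuous_attains_sup[OF compact_Times[OF compact_Icc compact_Icc] _ cont] assms by auto
  have "\<phi> (s, \<theta>) \<le> \<phi> q" if s: "s \<in> {a..b}" for s \<theta>
  proof -
    interpret periodic_fun_simple "\<lambda>\<theta>. \<phi> (s, \<theta>)" T
      by unfold_locales (rule per)
    define n where "n = \<lfloor>\<theta> / T\<rfloor>"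
    have "\<phi> (s, \<theta>) = \<phi> (s, (\<theta> - of_int n * T) + of_int n * T)" by simp
    also have "\<dots> = \<phi> (s, \<theta> - of_int n * T)" by (rule plus_of_int)
    also have "\<dots> \<le> \<phi> q"
      using s floor_divide_lower[OF \<open>T > 0\<close>, of \<theta>] floor_divide_upper[OF \<open>T > 0\<close>, of \<theta>]
      by (intro qmax) (auto simp: n_def algebra_simps)
    finally show ?thesis .
  qed
  then show ?thesis using q by (metis mem_Sigma_iff prod.collapse)
qed

lemma measure_superlevel_le_integral:
  fixes f :: "real \<Rightarrow> real"
  assumes cont: "continuous_on {a..b} f" and "0 \<le> c" and nonneg: "\<And>t. t \<in> {a..b} \<Longrightarrow> 0 \<le> f t"
  shows "c * measure lborel {t \<in> {a..b}. c \<le> f t} \<le> integral {a..b} f"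
proof -
  let ?A = "{t \<in> {a..b}. c \<le> f t}"
  have "?A = {a..b} \<inter> f -` {c..}" by auto
  then have "compact ?A"
    using continuous_closed_preimage[OF cont, of "{c..}"] bounded_subset[OF bounded_closed_interval, of _ a b]
    by (auto simp: compact_eq_bounded_closed)
  then have A: "?A \<in> lmeasurable" by (rule lmeasurable_compact)
  have ind: "indicat_real ?A integrable_on {a..b}"
    using integrable_on_indicator A by blast
  have "?A \<inter> {a..b} = ?A" by auto
  then have "integral {a..b} (indicat_real ?A) = measure lborel ?A"
    using integral_indicator[of ?A "{a..b}"] A borel_compact[OF \<open>compact ?A\<close>] by simp
  moreover have "integral {a..b} (\<lambda>t. c * indicat_real ?A t) \<le> integral {a..b} f"
    using assms integrable_continuous_real[OF cont]
    by (intro integral_le integrable_on_mult_right ind) (auto simp: indicator_def)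
  ultimately show ?thesis by simp
qed

lemma integral_unbounded_if_superlevel_infinite:
  fixes f :: "real \<Rightarrow> real"
  assumes cont: "continuous_on {0..} f" and nonneg: "\<And>t. 0 \<le> t \<Longrightarrow> 0 \<le> f t" and "c > 0"
    and inf: "emeasure lborel {s. 0 \<le> s \<and> c \<le> f s} = \<infinity>"
  shows "\<exists>S\<ge>0. K \<le> integral {0..S} f"
proof (rule ccontr)
  assume "\<not> ?thesis"
  then have bound: "integral {0..real n} f < K" for n by (meson not_le of_nat_0_le_iff)
  define B where "B n = {t \<in> {0..real n}. c \<le> f t}" for n
  have compB: "compact (B n)" for n
  proof -
    have "B n = {0..real n} \<inter> f -` {c..}" by (auto simp: B_def)
    then show ?thesis
      using continuous_closed_preimage[OF continuous_on_subset[OF cont], of "{0..real n}" "{c..}"]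
        bounded_subset[OF bounded_closed_interval, of _ 0 "real n"]
      by (auto simp: compact_eq_bounded_closed)
  qed
  have "emeasure lborel (B n) \<le> ennreal (K / c)" for n
  proof -
    have "c * measure lborel (B n) \<le> integral {0..real n} f"
      unfolding B_def using \<open>c > 0\<close> nonneg
      by (intro measure_superlevel_le_integral continuous_on_subset[OF cont]) auto
    then have "measure lborel (B n) \<le> K / c"
      using bound[of n] \<open>c > 0\<close> by (simp add: field_simps)
    moreover have "emeasure lborel (B n) = ennreal (measure lborel (B n))"
      using emeasure_bounded_finite[OF compact_imp_bounded[OF compB]]
      by (intro emeasure_eq_ennreal_measure less_imp_neq) (simp add: infinity_ennreal_def)
    ultimately show ?thesis by (simp add: ennreal_leI)
  qed
  moreover have "(SUP n. emeasure lborel (B n)) = emeasure lborel (\<Union>n. B n)"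
    using borel_compact[OF compB] by (intro SUP_emeasure_incseq) (auto simp: incseq_def B_def)
  moreover have "(\<Union>n. B n) = {s. 0 \<le> s \<and> c \<le> f s}"
    using real_arch_simple by (fastforce simp: B_def)
  ultimately have "emeasure lborel {s. 0 \<le> s \<and> c \<le> f s} \<le> ennreal (K / c)"
    by (metis SUP_least)
  then show False using inf by (simp add: top_unique)
qed

lemma open_fst_pos: "open {p :: real \<times> real. 0 < fst p}"
  by (simp add: open_Collect_less continuous_on_fst)

lemma bdd_harmonic_differentiable:
  assumes "bdd_harmonic_on_end g1 g2 w"
  shows "w differentiable_on {p. 0 < fst p}" and "ps w differentiable_on {p. 0 < fst p}"
    and "pt w differentiable_on {p. 0 < fst p}"
  using assms unfolding bdd_harmonic_on_end_def C2_on_def by auto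

lemma bdd_harmonic_diff_bounded:
  assumes "bdd_harmonic_on_end g1 g2 u" and "bdd_harmonic_on_end g1 g2 v"
  obtains M where "\<And>p. 0 \<le> fst p \<Longrightarrow> u p - v p \<le> M"
proof -
  obtain Mu Mv where "\<And>p. 0 \<le> fst p \<Longrightarrow> \<bar>u p\<bar> \<le> Mu" and "\<And>p. 0 \<le> fst p \<Longrightarrow> \<bar>v p\<bar> \<le> Mv"
    using assms unfolding bdd_harmonic_on_end_def by metis
  then have "\<And>p. 0 \<le> fst p \<Longrightarrow> u p - v p \<le> Mu + Mv" by fastforce
  then show ?thesis by (rule that)
qed

locale end_of_revolution =
  fixes g1 g2 g1' g2' :: "real \<Rightarrow> real"
  assumes d1: "\<And>s. 0 \<le> s \<Longrightarrow> (g1 has_real_derivative g1' s) (at s within {0..})"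
    and d2: "\<And>s. 0 \<le> s \<Longrightarrow> (g2 has_real_derivative g2' s) (at s within {0..})"
    and arclength: "\<And>s. 0 \<le> s \<Longrightarrow> ((g1' s)\<^sup>2 + (g2' s)\<^sup>2) / (g2 s)\<^sup>2 = 1"
    and pos1: "\<And>s. 0 \<le> s \<Longrightarrow> g1 s > 0"
    and pos2: "\<And>s. 0 \<le> s \<Longrightarrow> g2 s > 0"
begin

definition rho :: "real \<Rightarrow> real" where
  "rho t = g1 t / g2 t"

definition rho' :: "real \<Rightarrow> real" where
  "rho' t = (g1' t * g2 t - g1 t * g2' t) / (g2 t)\<^sup>2"

lemma g1_deriv: "0 < s \<Longrightarrow> (g1 has_real_derivative g1' s) (at s)"
  using has_real_derivative_at_pos d1 by simp

lemma g2_deriv: "0 < s \<Longrightarrow> (g2 has_real_derivative g2' s) (at s)"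
  using has_real_derivative_at_pos d2 by simp

lemma rho_pos: "0 \<le> t \<Longrightarrow> 0 < rho t"
  using pos1 pos2 by (simp add: rho_def)

lemma rho_deriv: "0 < t \<Longrightarrow> (rho has_real_derivative rho' t) (at t)"
  unfolding rho_def[abs_def] rho'_def
  using g1_deriv g2_deriv pos2[of t]
  by (auto intro!: derivative_eq_intros simp: power2_eq_square)

lemma continuous_inverse_rho: "continuous_on {0..} (\<lambda>t. 1 / rho t)"
proof -
  have "continuous_on {0..} g1" "continuous_on {0..} g2"
    using d1 d2 by (auto simp: continuous_on_eq_continuous_within intro: DERIV_continuous)
  then show ?thesis
    unfolding rho_def using pos1 pos2 by (intro continuous_intros) (auto dest: less_imp_neq[THEN not_sym])
qed

lemma ps_imm:
  assumes "0 < s"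
  shows "ps (imm g1 g2 0) (s, \<theta>) = g1' s * cos \<theta>"
    and "ps (imm g1 g2 1) (s, \<theta>) = g1' s * sin \<theta>"
    and "ps (imm g1 g2 2) (s, \<theta>) = g2' s"
  unfolding ps_def imm_def using g1_deriv[OF assms] g2_deriv[OF assms]
  by (auto intro!: DERIV_imp_deriv derivative_eq_intros)

lemma pt_imm:
  shows "pt (imm g1 g2 0) (s, \<theta>) = - (g1 s * sin \<theta>)"
    and "pt (imm g1 g2 1) (s, \<theta>) = g1 s * cos \<theta>"
    and "pt (imm g1 g2 2) (s, \<theta>) = 0"
  unfolding pt_def imm_def by (auto intro!: DERIV_imp_deriv derivative_eq_intros)

lemma metric_coefficients:
  assumes "0 < s"
  shows "metE g1 g2 (s, \<theta>) = 1" and "metF g1 g2 (s, \<theta>) = 0"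
    and "metG g1 g2 (s, \<theta>) = (rho s)\<^sup>2"
proof -
  have three: "{..<3::nat} = {0, 1, 2}" by auto
  have circle: "(a * cos \<theta>)\<^sup>2 + (a * sin \<theta>)\<^sup>2 = a\<^sup>2" for a :: real
    by (simp add: power_mult_distrib flip: distrib_left)
  have "metE g1 g2 (s, \<theta>) = ((g1' s * cos \<theta>)\<^sup>2 + (g1' s * sin \<theta>)\<^sup>2 + (g2' s)\<^sup>2) / (g2 s)\<^sup>2"
    unfolding metE_def three using ps_imm[OF assms] by (simp add: algebra_simps)
  then show "metE g1 g2 (s, \<theta>) = 1" using arclength assms by (simp add: circle)
  show "metF g1 g2 (s, \<theta>) = 0"
    unfolding metF_def three using ps_imm[OF assms] pt_imm by (simp add: algebra_simps)
  have "metG g1 g2 (s, \<theta>) = ((g1 s * cos \<theta>)\<^sup>2 + (g1 s * sin \<theta>)\<^sup>2) / (g2 s)\<^sup>2"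
    unfolding metG_def three using pt_imm by (simp add: algebra_simps)
  then show "metG g1 g2 (s, \<theta>) = (rho s)\<^sup>2" by (simp add: circle rho_def power_divide)
qed

lemma laplace_beltrami_eq:
  assumes "0 < s" and "ps u differentiable_on {p. 0 < fst p}"
    and "pt u differentiable_on {p. 0 < fst p}"
  shows "laplace_beltrami g1 g2 u (s, \<theta>) =
    (rho' s * ps u (s, \<theta>) + rho s * ps (ps u) (s, \<theta>) + pt (pt u) (s, \<theta>) / rho s) / rho s"
proof -
  have W: "sqrt (metE g1 g2 (t, \<theta>') * metG g1 g2 (t, \<theta>') - (metF g1 g2 (t, \<theta>'))\<^sup>2) = rho t"
    if "0 < t" for t \<theta>'
    using metric_coefficients[OF that] rho_pos[of t] that by simp
  have "((\<lambda>t. rho t * ps u (t, \<theta>)) has_real_derivative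
      rho' s * ps u (s, \<theta>) + rho s * ps (ps u) (s, \<theta>)) (at s)"
    using rho_deriv[OF assms(1)] has_real_derivative_ps[OF assms(2) open_fst_pos, of s \<theta>] assms(1)
    by (auto intro!: derivative_eq_intros)
  then have "((\<lambda>t. (metG g1 g2 (t, \<theta>) * ps u (t, \<theta>) - metF g1 g2 (t, \<theta>) * pt u (t, \<theta>))
      / sqrt (metE g1 g2 (t, \<theta>) * metG g1 g2 (t, \<theta>) - (metF g1 g2 (t, \<theta>))\<^sup>2))
      has_real_derivative rho' s * ps u (s, \<theta>) + rho s * ps (ps u) (s, \<theta>)) (at s)"
    by (rule has_field_derivative_transform_within_open[where S = "{0<..}"])
      (use assms(1) metric_coefficients W rho_pos in \<open>auto simp: power2_eq_square\<close>)
  then have s_part: "ps (\<lambda>q. (metG g1 g2 q * ps u q - metF g1 g2 q * pt u q)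
      / sqrt (metE g1 g2 q * metG g1 g2 q - (metF g1 g2 q)\<^sup>2)) (s, \<theta>)
      = rho' s * ps u (s, \<theta>) + rho s * ps (ps u) (s, \<theta>)"
    unfolding ps_def by (simp add: DERIV_imp_deriv)
  have "((\<lambda>t. pt u (s, t) / rho s) has_real_derivative pt (pt u) (s, \<theta>) / rho s) (at \<theta>)"
    using has_real_derivative_pt[OF assms(3) open_fst_pos, of s \<theta>] assms(1) rho_pos[of s]
    by (auto intro!: derivative_eq_intros)
  then have \<theta>_part: "pt (\<lambda>q. (metE g1 g2 q * pt u q - metF g1 g2 q * ps u q)
      / sqrt (metE g1 g2 q * metG g1 g2 q - (metF g1 g2 q)\<^sup>2)) (s, \<theta>) = pt (pt u) (s, \<theta>) / rho s"
    unfolding pt_def using metric_coefficients[OF assms(1)] W[OF assms(1)] rho_pos[of s] assms(1)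
    by (simp add: DERIV_imp_deriv)
  show ?thesis
    unfolding laplace_beltrami_def Let_def s_part \<theta>_part W[OF assms(1)] ..
qed

lemma bdd_harmonic_radial_eq:
  assumes "bdd_harmonic_on_end g1 g2 u" and "0 < s"
  shows "rho' s * ps u (s, \<theta>) + rho s * ps (ps u) (s, \<theta>) + pt (pt u) (s, \<theta>) / rho s = 0"
  using assms laplace_beltrami_eq[OF assms(2), of u \<theta>] rho_pos[of s]
  unfolding bdd_harmonic_on_end_def C2_on_def by auto

text \<open>\<open>h\<close> satisfies \<open>(rho h')' = 0\<close>, so it is a harmonic function of s alone.\<close>

definition h :: "real \<Rightarrow> real" where
  "h s = integral {0..s} (\<lambda>t. 1 / rho t)"

lemma h_deriv_within: "x \<in> {0..b} \<Longrightarrow> (h has_real_derivative 1 / rho x) (at x within {0..b})"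
  unfolding h_def[abs_def]
  by (rule integral_has_real_derivative) (auto intro: continuous_on_subset[OF continuous_inverse_rho])

lemma h_deriv: "0 < t \<Longrightarrow> (h has_real_derivative 1 / rho t) (at t)"
  using h_deriv_within[of t "t + 1"] at_within_interior[of t "{0..t + 1}"] by simp

lemma continuous_on_h: "continuous_on {0..b} h"
  unfolding continuous_on_eq_continuous_within using h_deriv_within DERIV_continuous by blast

lemma h_0 [simp]: "h 0 = 0"
  by (simp add: h_def)

lemma h_nonneg: "0 \<le> s \<Longrightarrow> 0 \<le> h s"
  unfolding h_def using rho_pos
  by (intro integral_nonneg integrable_continuous_real continuous_on_subset[OF continuous_inverse_rho])
    (auto simp: less_imp_le)

lemma h_mono: "0 \<le> a \<Longrightarrow> a \<le> b \<Longrightarrow> h a \<le> h b"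
  unfolding h_def using rho_pos
  by (intro integral_subset_le integrable_continuous_real continuous_on_subset[OF continuous_inverse_rho])
    (auto simp: less_imp_le)

definition barrier :: "(real \<times> real \<Rightarrow> real) \<Rightarrow> (real \<times> real \<Rightarrow> real) \<Rightarrow> real \<Rightarrow> real \<Rightarrow> real \<times> real \<Rightarrow> real"
  where "barrier u v \<epsilon> \<delta> q = u q - v q - \<epsilon> * h (fst q) + \<delta> * (h (fst q))\<^sup>2"

lemma barrier_deriv_s:
  assumes Hu: "bdd_harmonic_on_end g1 g2 u" and Hv: "bdd_harmonic_on_end g1 g2 v" and "0 < t"
  shows "((\<lambda>t. barrier u v \<epsilon> \<delta> (t, \<theta>)) has_real_derivative
    ps u (t, \<theta>) - ps v (t, \<theta>) - (\<epsilon> - 2 * \<delta> * h t) / rho t) (at t)"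
proof -
  have "rho t \<noteq> 0" using rho_pos[of t] \<open>0 < t\<close> by simp
  then show ?thesis
    unfolding barrier_def fst_conv
    using has_real_derivative_ps[OF bdd_harmonic_differentiable(1)[OF Hu] open_fst_pos, of t \<theta>]
      has_real_derivative_ps[OF bdd_harmonic_differentiable(1)[OF Hv] open_fst_pos, of t \<theta>]
      h_deriv[OF \<open>0 < t\<close>] \<open>0 < t\<close>
    by (auto intro!: derivative_eq_intros simp: field_simps)
qed

lemma barrier_deriv2_s:
  assumes Hu: "bdd_harmonic_on_end g1 g2 u" and Hv: "bdd_harmonic_on_end g1 g2 v" and "0 < s"
  shows "((\<lambda>t. ps u (t, \<theta>) - ps v (t, \<theta>) - (\<epsilon> - 2 * \<delta> * h t) / rho t) has_real_derivative
    ps (ps u) (s, \<theta>) - ps (ps v) (s, \<theta>) + ((\<epsilon> - 2 * \<delta> * h s) * rho' s + 2 * \<delta>) / (rho s)\<^sup>2) (at s)"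
proof -
  have "rho s \<noteq> 0" using rho_pos[of s] \<open>0 < s\<close> by simp
  then show ?thesis
    using has_real_derivative_ps[OF bdd_harmonic_differentiable(2)[OF Hu] open_fst_pos, of s \<theta>]
      has_real_derivative_ps[OF bdd_harmonic_differentiable(2)[OF Hv] open_fst_pos, of s \<theta>]
      h_deriv[OF \<open>0 < s\<close>] rho_deriv[OF \<open>0 < s\<close>] \<open>0 < s\<close>
    by (auto intro!: derivative_eq_intros simp: field_simps power2_eq_square)
qed

lemma barrier_deriv_\<theta>:
  assumes Hu: "bdd_harmonic_on_end g1 g2 u" and Hv: "bdd_harmonic_on_end g1 g2 v" and "0 < s"
  shows "((\<lambda>t. barrier u v \<epsilon> \<delta> (s, t)) has_real_derivative pt u (s, t) - pt v (s, t)) (at t)"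
  unfolding barrier_def
  using has_real_derivative_pt[OF bdd_harmonic_differentiable(1)[OF Hu] open_fst_pos]
    has_real_derivative_pt[OF bdd_harmonic_differentiable(1)[OF Hv] open_fst_pos] \<open>0 < s\<close>
  by (auto intro!: derivative_eq_intros)

lemma barrier_no_local_max:
  assumes Hu: "bdd_harmonic_on_end g1 g2 u" and Hv: "bdd_harmonic_on_end g1 g2 v"
    and "0 < \<delta>" and "0 < d" and "d \<le> s1"
    and max: "\<And>t \<theta>. \<bar>s1 - t\<bar> < d \<Longrightarrow> barrier u v \<epsilon> \<delta> (t, \<theta>) \<le> barrier u v \<epsilon> \<delta> (s1, \<theta>1)"
  shows False
proof -
  have "0 < s1" using assms by simp
  let ?k = "\<epsilon> - 2 * \<delta> * h s1"
  have "((\<lambda>t. barrier u v \<epsilon> \<delta> (t, \<theta>1)) has_real_derivative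
      ps u (t, \<theta>1) - ps v (t, \<theta>1) - (\<epsilon> - 2 * \<delta> * h t) / rho t) (at t)" if "\<bar>s1 - t\<bar> < d" for t
    using that assms by (intro barrier_deriv_s[OF Hu Hv]) linarith
  from DERIV_local_max_second[OF \<open>0 < d\<close> max[where \<theta> = \<theta>1] this barrier_deriv2_s[OF Hu Hv \<open>0 < s1\<close>]]
  have P: "ps u (s1, \<theta>1) - ps v (s1, \<theta>1) - ?k / rho s1 = 0"
    and Q: "ps (ps u) (s1, \<theta>1) - ps (ps v) (s1, \<theta>1) + (?k * rho' s1 + 2 * \<delta>) / (rho s1)\<^sup>2 \<le> 0"
    by simp_all
  have "((\<lambda>t. pt u (s1, t) - pt v (s1, t)) has_real_derivative
      pt (pt u) (s1, \<theta>1) - pt (pt v) (s1, \<theta>1)) (at \<theta>1)"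
    using has_real_derivative_pt[OF bdd_harmonic_differentiable(3)[OF Hu] open_fst_pos]
      has_real_derivative_pt[OF bdd_harmonic_differentiable(3)[OF Hv] open_fst_pos] \<open>0 < s1\<close>
    by (auto intro!: derivative_eq_intros)
  from DERIV_local_max_second[OF \<open>0 < d\<close> _ barrier_deriv_\<theta>[OF Hu Hv \<open>0 < s1\<close>, where \<epsilon> = \<epsilon> and \<delta> = \<delta>] this]
  have T: "pt (pt u) (s1, \<theta>1) - pt (pt v) (s1, \<theta>1) \<le> 0"
    using max[of s1] \<open>0 < d\<close> by simp
  have "rho' s1 * (ps u (s1, \<theta>1) - ps v (s1, \<theta>1)) + rho s1 * (ps (ps u) (s1, \<theta>1) - ps (ps v) (s1, \<theta>1))
      + (pt (pt u) (s1, \<theta>1) - pt (pt v) (s1, \<theta>1)) / rho s1 = 0" (is "?L = 0")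
    using bdd_harmonic_radial_eq[OF Hu \<open>0 < s1\<close>, of \<theta>1] bdd_harmonic_radial_eq[OF Hv \<open>0 < s1\<close>, of \<theta>1]
    by (simp add: algebra_simps diff_divide_distrib)
  moreover have "?L < 0"
    using radial_operator_neg[OF rho_pos _ P Q T] \<open>0 < s1\<close> \<open>0 < \<delta>\<close> by simp
  ultimately show False by simp
qed

lemma barrier_attains_max:
  assumes Hu: "bdd_harmonic_on_end g1 g2 u" and Hv: "bdd_harmonic_on_end g1 g2 v" and "0 \<le> S"
  shows "\<exists>s1\<in>{0..S}. \<exists>\<theta>1. \<forall>s\<in>{0..S}. \<forall>\<theta>. barrier u v \<epsilon> \<delta> (s, \<theta>) \<le> barrier u v \<epsilon> \<delta> (s1, \<theta>1)"
proof (rule periodic_attains_max_on_strip)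
  let ?K = "{0..S} \<times> {0..2 * pi}"
  have K: "?K \<subseteq> {p. 0 \<le> fst p}" by auto
  have "continuous_on ?K w" if "bdd_harmonic_on_end g1 g2 w" for w
    using that continuous_on_subset[OF _ K] unfolding bdd_harmonic_on_end_def by blast
  moreover have "continuous_on ?K (\<lambda>q. h (fst q))"
    by (rule continuous_on_compose2[OF continuous_on_h[of S] continuous_on_fst]) auto
  ultimately show "continuous_on ?K (barrier u v \<epsilon> \<delta>)"
    using Hu Hv unfolding barrier_def by (intro continuous_intros)
  show "barrier u v \<epsilon> \<delta> (s, \<theta> + 2 * pi) = barrier u v \<epsilon> \<delta> (s, \<theta>)" for s \<theta>
    using Hu Hv unfolding bdd_harmonic_on_end_def barrier_def by simp
qed (use \<open>0 \<le> S\<close> in auto)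

lemma bdd_harmonic_comparison:
  assumes h_unbounded: "\<And>K. \<exists>S\<ge>0. K \<le> h S"
    and Hu: "bdd_harmonic_on_end g1 g2 u" and Hv: "bdd_harmonic_on_end g1 g2 v"
    and boundary: "\<And>\<theta>. u (0, \<theta>) \<le> v (0, \<theta>)" and "0 \<le> s0"
  shows "u (s0, \<theta>0) \<le> v (s0, \<theta>0)"
proof (rule ccontr)
  define a where "a = u (s0, \<theta>0) - v (s0, \<theta>0)"
  assume "\<not> ?thesis"
  then have "0 < a" by (simp add: a_def)
  obtain M where M: "\<And>p. 0 \<le> fst p \<Longrightarrow> u p - v p \<le> M"
    using bdd_harmonic_diff_bounded[OF Hu Hv] by blast
  have "0 \<le> h s0" using h_nonneg \<open>0 \<le> s0\<close> by simp
  define \<epsilon> where "\<epsilon> = a / (2 * (h s0 + 1))"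
  have "0 < \<epsilon>" using \<open>0 < a\<close> \<open>0 \<le> h s0\<close> by (simp add: \<epsilon>_def)
  have "\<epsilon> * h s0 \<le> \<epsilon> * (h s0 + 1)" using \<open>0 < \<epsilon>\<close> by simp
  also have "\<dots> = a / 2" using \<open>0 \<le> h s0\<close> by (simp add: \<epsilon>_def field_simps)
  finally have "\<epsilon> * h s0 < a" using \<open>0 < a\<close> by simp
  obtain S0 where "0 \<le> S0" and S0: "(M + 1) / \<epsilon> \<le> h S0" using h_unbounded by blast
  define S where "S = max S0 (s0 + 1)"
  have "s0 < S" and "0 \<le> S" using \<open>0 \<le> s0\<close> by (simp_all add: S_def)
  have "M + 1 \<le> \<epsilon> * h S0" using S0 \<open>0 < \<epsilon>\<close> by (simp add: field_simps)
  also have "\<dots> \<le> \<epsilon> * h S"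
    using \<open>0 \<le> S0\<close> \<open>0 < \<epsilon>\<close> by (intro mult_left_mono h_mono) (auto simp: S_def)
  finally have "M + 1 \<le> \<epsilon> * h S" .
  define \<delta> where "\<delta> = 1 / (2 * ((h S)\<^sup>2 + 1))"
  have "0 < (h S)\<^sup>2 + 1" by (intro add_nonneg_pos) auto
  then have "0 < \<delta>" and "\<delta> * (h S)\<^sup>2 < 1" by (simp_all add: \<delta>_def field_simps)
  let ?\<phi> = "barrier u v \<epsilon> \<delta>"
  obtain s1 \<theta>1 where s1: "s1 \<in> {0..S}" and max: "\<And>s \<theta>. s \<in> {0..S} \<Longrightarrow> ?\<phi> (s, \<theta>) \<le> ?\<phi> (s1, \<theta>1)"
    using barrier_attains_max[OF Hu Hv \<open>0 \<le> S\<close>, where \<epsilon> = \<epsilon> and \<delta> = \<delta>] by blast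
  have "0 < ?\<phi> (s0, \<theta>0)"
    using \<open>\<epsilon> * h s0 < a\<close> \<open>0 < \<delta>\<close> by (simp add: barrier_def a_def add_pos_nonneg)
  also have "\<dots> \<le> ?\<phi> (s1, \<theta>1)" using max \<open>0 \<le> s0\<close> \<open>s0 < S\<close> by simp
  finally have "0 < ?\<phi> (s1, \<theta>1)" .
  moreover have "?\<phi> (0, \<theta>1) \<le> 0" using boundary[of \<theta>1] by (simp add: barrier_def)
  moreover have "?\<phi> (S, \<theta>1) < 0"
    using M[of "(S, \<theta>1)"] \<open>M + 1 \<le> \<epsilon> * h S\<close> \<open>\<delta> * (h S)\<^sup>2 < 1\<close> \<open>s0 < S\<close> \<open>0 \<le> s0\<close>
    by (simp add: barrier_def)
  ultimately have "0 < s1" and "s1 < S" using s1 by (metis atLeastAtMost_iff less_eq_real_def not_less)+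
  have "?\<phi> (t, \<theta>) \<le> ?\<phi> (s1, \<theta>1)" if "\<bar>s1 - t\<bar> < min s1 (S - s1)" for t \<theta>
    using that by (intro max) auto
  then show False
    using barrier_no_local_max[OF Hu Hv \<open>0 < \<delta>\<close>, of "min s1 (S - s1)" s1] \<open>0 < s1\<close> \<open>s1 < S\<close>
    by force
qed

end

theorem theorem4p1:
  fixes g1 g2 g1' g2' :: "real \<Rightarrow> real" and c :: real
  assumes smooth1: "smooth_halfline g1" and smooth2: "smooth_halfline g2"
    and d1: "\<And>s. 0 \<le> s \<Longrightarrow> (g1 has_real_derivative g1' s) (at s within {0..})"
    and d2: "\<And>s. 0 \<le> s \<Longrightarrow> (g2 has_real_derivative g2' s) (at s within {0..})"
    and arclength: "\<And>s. 0 \<le> s \<Longrightarrow> ((g1' s)\<^sup>2 + (g2' s)\<^sup>2) / (g2 s)\<^sup>2 = 1"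
    and pos1: "\<And>s. 0 \<le> s \<Longrightarrow> g1 s > 0"
    and pos2: "\<And>s. 0 \<le> s \<Longrightarrow> g2 s > 0"
    and c_pos: "c > 0"
    and infinite: "emeasure lborel {s. 0 \<le> s \<and> g2 s / g1 s \<ge> c} = \<infinity>"
  shows "parabolic_end g1 g2"
proof -
  interpret end_of_revolution g1 g2 g1' g2'
    by unfold_locales (fact d1 d2 arclength pos1 pos2)+
  have "{s. 0 \<le> s \<and> c \<le> 1 / rho s} = {s. 0 \<le> s \<and> g2 s / g1 s \<ge> c}"
    by (simp add: rho_def)
  then have h_unbounded: "\<exists>S\<ge>0. K \<le> h S" for K
    unfolding h_def using rho_pos c_pos infinite
    by (intro integral_unbounded_if_superlevel_infinite continuous_inverse_rho) (auto simp: less_imp_le)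
  show ?thesis
    unfolding parabolic_end_def
  proof (intro allI impI)
    fix u v :: "real \<times> real \<Rightarrow> real" and p :: "real \<times> real"
    assume "bdd_harmonic_on_end g1 g2 u" "bdd_harmonic_on_end g1 g2 v"
      "\<forall>\<theta>. u (0, \<theta>) = v (0, \<theta>)" "0 \<le> fst p"
    then show "u p = v p"
      using bdd_harmonic_comparison[OF h_unbounded, of u v "fst p" "snd p"]
        bdd_harmonic_comparison[OF h_unbounded, of v u "fst p" "snd p"]
      by force
  qed
qed

end
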